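(* No randomized mechanism that is truthful in expectation (without money and with verification) for CAs with known $2$-minded bidders has expected approximation ratio at most $1.09$. This holds even restricted to instances with $n=2$ bidders and $m=2$ goods.
   Context: Combinatorial auction with a set $\mathsf U$ of $m$ goods (single copy each) and $n$ bidders; bidder $i$ has a public collection $\mathcal S_i$ of $k$ nonempty subsets of $\mathsf U$ (known bidders; here $k=2$) and a private valuation $v_i:\mathcal S_i\to\mathbb R_{\ge0}$, extended by $v_i(T)=\max\{v_i(S'):S'\in\mathcal S_i,S'\subseteq T\}$ ($0$ if none). A declaration is any valuation $b_i:\mathcal S_i\to\mathbb R_{\ge0}$. A randomized mechanism maps declarations to a probability distribution over feasible allocations (pairwise disjoint sets with $A_i\in\mathcal S_i\cup\{\emptyset\}$). It is truthful in expectation (with verification) if for all $i$, $\mathbf b_{-i}$, true $v_i$ and every declaration $b_i$ that never overbids on an awarded set (i.e., $b_i(A_i(b_i,\mathbf b_{-i}))\le v_i(A_i(b_i,\mathbf b_{-i}))$ for every outcome of the randomization), $\mathbb E[v_i(A_i(v_i,\mathbf b_{-i}))]\ge\mathbb E[v_i(A_i(b_i,\mathbf b_{-i}))]$. Expected approximation ratio $\alpha$: on every truthful input, the expected social welfare is at least $\mathrm{OPT}/\alpha$, where $\mathrm{OPT}$ is the maximum welfare of a feasible allocation. *)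

theory Defs
  imports "HOL-Probability.Probability"
begin

text \<open>Valuations / declarations are functions 'g set => real that are nonnegative
  on S i and zero outside S i (i.e. functions S_i -> R_{>=0}).\<close>

definition valid_collections :: "'b set \<Rightarrow> 'g set \<Rightarrow> nat \<Rightarrow> ('b \<Rightarrow> 'g set set) \<Rightarrow> bool" where
  "valid_collections N U k S \<longleftrightarrow>
     (\<forall>i\<in>N. card (S i) = k \<and> (\<forall>T\<in>S i. T \<noteq> {} \<and> T \<subseteq> U)) \<and>
     (\<forall>i. i \<notin> N \<longrightarrow> S i = {})"

definition valid_decl :: "'g set set \<Rightarrow> ('g set \<Rightarrow> real) \<Rightarrow> bool" where
  "valid_decl C b \<longleftrightarrow> (\<forall>T\<in>C. 0 \<le> b T) \<and> (\<forall>T. T \<notin> C \<longrightarrow> b T = 0)"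

definition valid_profile :: "'b set \<Rightarrow> ('b \<Rightarrow> 'g set set) \<Rightarrow> ('b \<Rightarrow> 'g set \<Rightarrow> real) \<Rightarrow> bool" where
  "valid_profile N S b \<longleftrightarrow> (\<forall>i\<in>N. valid_decl (S i) (b i)) \<and> (\<forall>i. i \<notin> N \<longrightarrow> b i = (\<lambda>_. 0))"

definition ext :: "'g set set \<Rightarrow> ('g set \<Rightarrow> real) \<Rightarrow> 'g set \<Rightarrow> real" where
  "ext C v T = Max (insert 0 (v ` {S'\<in>C. S' \<subseteq> T}))"

definition feasible :: "'b set \<Rightarrow> ('b \<Rightarrow> 'g set set) \<Rightarrow> ('b \<Rightarrow> 'g set) \<Rightarrow> bool" where
  "feasible N S A \<longleftrightarrow>
     (\<forall>i\<in>N. A i \<in> S i \<or> A i = {}) \<and>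
     (\<forall>i\<in>N. \<forall>j\<in>N. i \<noteq> j \<longrightarrow> A i \<inter> A j = {}) \<and>
     (\<forall>i. i \<notin> N \<longrightarrow> A i = {})"

definition welfare :: "'b set \<Rightarrow> ('b \<Rightarrow> 'g set set) \<Rightarrow> ('b \<Rightarrow> 'g set \<Rightarrow> real) \<Rightarrow> ('b \<Rightarrow> 'g set) \<Rightarrow> real" where
  "welfare N S v A = (\<Sum>i\<in>N. ext (S i) (v i) (A i))"

definition OPT :: "'b set \<Rightarrow> ('b \<Rightarrow> 'g set set) \<Rightarrow> ('b \<Rightarrow> 'g set \<Rightarrow> real) \<Rightarrow> real" where
  "OPT N S v = Max {welfare N S v A | A. feasible N S A}"

type_synonym ('b, 'g) mechanism = "('b \<Rightarrow> 'g set set) \<Rightarrow> ('b \<Rightarrow> 'g set \<Rightarrow> real) \<Rightarrow> ('b \<Rightarrow> 'g set) pmf"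

definition is_mechanism :: "'b set \<Rightarrow> 'g set \<Rightarrow> nat \<Rightarrow> ('b, 'g) mechanism \<Rightarrow> bool" where
  "is_mechanism N U k M \<longleftrightarrow>
     (\<forall>S b. valid_collections N U k S \<and> valid_profile N S b \<longrightarrow>
        (\<forall>A\<in>set_pmf (M S b). feasible N S A))"

definition truthful_in_expectation :: "'b set \<Rightarrow> 'g set \<Rightarrow> nat \<Rightarrow> ('b, 'g) mechanism \<Rightarrow> bool" where
  "truthful_in_expectation N U k M \<longleftrightarrow>
     (\<forall>S bp i v b'. valid_collections N U k S \<and> valid_profile N S bp \<and> i \<in> N \<and>
        valid_decl (S i) v \<and> valid_decl (S i) b' \<and>
        (\<forall>A\<in>set_pmf (M S (bp(i := b'))). b' (A i) \<le> ext (S i) v (A i)) \<longrightarrow>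
        measure_pmf.expectation (M S (bp(i := b'))) (\<lambda>A. ext (S i) v (A i))
          \<le> measure_pmf.expectation (M S (bp(i := v))) (\<lambda>A. ext (S i) v (A i)))"

definition expected_approx_ratio :: "'b set \<Rightarrow> 'g set \<Rightarrow> nat \<Rightarrow> ('b, 'g) mechanism \<Rightarrow> real \<Rightarrow> bool" where
  "expected_approx_ratio N U k M \<alpha> \<longleftrightarrow>
     (\<forall>S v. valid_collections N U k S \<and> valid_profile N S v \<longrightarrow>
        measure_pmf.expectation (M S v) (welfare N S v) \<ge> OPT N S v / \<alpha>)"

end

theory Submission
  imports Defs
begin

text \<open>Take two goods a, b and let both collections be {{a},{b}}. If both bidders value a at 1
  and b at x, every allocation has welfare at most 1 + x, so some bidder j receives expected
  value at most (1 + x)/2. Should j declare 0 for b instead, he never overbids, so by truthfulness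
  his expected true value does not increase. In the new instance OPT = 1 + x, while an allocation
  has welfare above 1 only if j receives a; hence its welfare is at most 1 + x times j's true
  value of his bundle. Together, (1 + x)/\<alpha> \<le> 1 + x(1 + x)/2, which fails for x = 2/5 and
  \<alpha> = 1.09.\<close>

lemma finite_feasible:
  assumes "finite N" "finite U" "valid_collections N U k S"
  shows "finite {A. feasible N S A}"
proof (rule finite_subset)
  show "{A. feasible N S A} \<subseteq> {A. \<forall>i. (i \<in> N \<longrightarrow> A i \<in> Pow U) \<and> (i \<notin> N \<longrightarrow> A i = {})}"
    using assms(3) by (fastforce simp: feasible_def valid_collections_def)
  show "finite {A. \<forall>i. (i \<in> N \<longrightarrow> A i \<in> Pow U) \<and> (i \<notin> N \<longrightarrow> A i = {})}"
    using assms(1,2) by (intro finite_set_of_finite_funs) auto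
qed

lemma welfare_le_OPT:
  assumes "finite N" "finite U" "valid_collections N U k S" "feasible N S A"
  shows "welfare N S v A \<le> OPT N S v"
proof -
  have "finite {welfare N S v A | A. feasible N S A}"
    using finite_feasible[OF assms(1-3)] by (simp add: setcompr_eq_image)
  then show ?thesis
    unfolding OPT_def using assms(4) by (intro Max_ge) auto
qed

lemma finite_set_pmf_mechanism:
  assumes "is_mechanism N U k M" "valid_collections N U k S" "valid_profile N S b"
    "finite N" "finite U"
  shows "finite (set_pmf (M S b))"
proof (rule finite_subset)
  show "set_pmf (M S b) \<subseteq> {A. feasible N S A}"
    using assms(1-3) unfolding is_mechanism_def by blast
qed (rule finite_feasible[OF assms(4,5,2)])

lemma valid_profile_update:
  assumes "valid_profile N S b" "i \<in> N" "valid_decl (S i) v"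
  shows "valid_profile N S (b(i := v))"
  using assms by (auto simp: valid_profile_def)

lemma ext_nonneg:
  assumes "finite C"
  shows "0 \<le> ext C v T"
  unfolding ext_def using assms by (intro Max_ge) auto

lemma ext_ge:
  assumes "finite C" "T \<in> C"
  shows "v T \<le> ext C v T"
  unfolding ext_def using assms by (intro Max_ge) auto

lemma truthful_underbid:
  assumes truthful: "truthful_in_expectation N U k M" and mech: "is_mechanism N U k M"
    and S: "valid_collections N U k S" and b: "valid_profile N S b"
    and fin: "finite U" and i: "i \<in> N"
    and v: "valid_decl (S i) v" and v': "valid_decl (S i) v'" and below: "\<forall>T\<in>S i. v' T \<le> v T"
  shows "measure_pmf.expectation (M S (b(i := v'))) (\<lambda>A. ext (S i) v (A i))
           \<le> measure_pmf.expectation (M S (b(i := v))) (\<lambda>A. ext (S i) v (A i))"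
proof -
  have finC: "finite (S i)"
    using S fin i unfolding valid_collections_def by (meson Pow_iff finite_Pow_iff finite_subset subsetI)
  have "v' (A i) \<le> ext (S i) v (A i)" if "A \<in> set_pmf (M S (b(i := v')))" for A
  proof -
    have "feasible N S A"
      using mech S valid_profile_update[OF b i v'] that unfolding is_mechanism_def by blast
    then have "A i \<in> S i \<or> A i = {}"
      using i unfolding feasible_def by blast
    moreover have "{} \<notin> S i"
      using S i unfolding valid_collections_def by blast
    ultimately show ?thesis
      using below v' ext_ge[OF finC] ext_nonneg[OF finC] unfolding valid_decl_def
      by (metis order_trans)
  qed
  then show ?thesis
    using truthful S b i v v' unfolding truthful_in_expectation_def by blast
qed

lemma expectation_mono_finite_support:
  fixes f g :: "'a \<Rightarrow> real"
  assumes "finite (set_pmf P)" "\<And>x. x \<in> set_pmf P \<Longrightarrow> f x \<le> g x"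
  shows "measure_pmf.expectation P f \<le> measure_pmf.expectation P g"
  using assms by (intro integral_mono_AE integrable_measure_pmf_finite AE_pmfI)

definition item_values :: "'g \<Rightarrow> 'g \<Rightarrow> real \<Rightarrow> real \<Rightarrow> 'g set \<Rightarrow> real" where
  "item_values a b p q T = (if T = {a} then p else if T = {b} then q else 0)"

lemma valid_decl_item_values:
  assumes "0 \<le> p" "0 \<le> q"
  shows "valid_decl {{a}, {b}} (item_values a b p q)"
  using assms by (auto simp: valid_decl_def item_values_def)

lemma ext_item_values:
  assumes "a \<noteq> b" "0 \<le> p" "0 \<le> q" "T \<in> {{}, {a}, {b}}"
  shows "ext {{a}, {b}} (item_values a b p q) T = item_values a b p q T"
proof -
  have "{S' \<in> {{a}, {b}}. S' \<subseteq> T} = (if T = {} then {} else {T})"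
    using assms(1,4) by auto
  then show ?thesis
    using assms by (auto simp: ext_def item_values_def)
qed

lemma item_values_disjoint_sum_le:
  assumes "a \<noteq> b" "0 \<le> x" "A \<in> {{}, {a}, {b}}" "B \<in> {{}, {a}, {b}}" "A \<inter> B = {}"
  shows "item_values a b 1 x A + item_values a b 1 x B \<le> 1 + x"
  using assms by (auto simp: item_values_def)

lemma item_values_misreport_le:
  assumes "a \<noteq> b" "0 \<le> x" "x \<le> 1" "A \<in> {{}, {a}, {b}}" "B \<in> {{}, {a}, {b}}" "A \<inter> B = {}"
  shows "item_values a b 1 x A + item_values a b 1 0 B \<le> 1 + x * item_values a b 1 x B"
  using assms by (auto simp: item_values_def)

lemma feasible_two_items:
  assumes "N = {i, j}" "i \<noteq> j" "feasible N (\<lambda>k. if k \<in> N then {{a}, {b}} else {}) A"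
  shows "A i \<in> {{}, {a}, {b}}" "A j \<in> {{}, {a}, {b}}" "A i \<inter> A j = {}"
  using assms unfolding feasible_def by auto

lemma valid_two_item_instance:
  assumes "U = {a, b}" "a \<noteq> b" "0 \<le> x"
  shows "valid_collections N U 2 (\<lambda>k. if k \<in> N then {{a}, {b}} else {})"
    and "valid_profile N (\<lambda>k. if k \<in> N then {{a}, {b}} else {})
           (\<lambda>k. if k \<in> N then item_values a b 1 x else (\<lambda>_. 0))"
  using assms by (auto simp: valid_collections_def valid_profile_def intro: valid_decl_item_values)

lemma misreport_bound:
  fixes M :: "('b, 'g) mechanism"
  assumes N: "N = {i, j}" "i \<noteq> j" and U: "U = {a, b}" "a \<noteq> b"
    and mech: "is_mechanism N U 2 M" and truthful: "truthful_in_expectation N U 2 M"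
    and ratio: "expected_approx_ratio N U 2 M \<alpha>" and "0 < \<alpha>" and x: "0 \<le> x" "x \<le> 1"
  defines "S \<equiv> \<lambda>k. if k \<in> N then {{a}, {b}} else {}"
    and "v \<equiv> \<lambda>k. if k \<in> N then item_values a b 1 x else (\<lambda>_. 0)"
  shows "(1 + x) / \<alpha>
           \<le> 1 + x * measure_pmf.expectation (M S v) (\<lambda>A. ext {{a}, {b}} (item_values a b 1 x) (A j))"
proof -
  define v' where "v' = v(j := item_values a b 1 0)"
  define u where "u = (\<lambda>A. ext {{a}, {b}} (item_values a b 1 x) (A j))"
  have fin: "finite N" "finite U" using N U by auto
  have S_ij: "S i = {{a}, {b}}" "S j = {{a}, {b}}" using N by (auto simp: S_def)
  have v_ij: "v i = item_values a b 1 x" "v j = item_values a b 1 x" using N by (auto simp: v_def)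
  have VC: "valid_collections N U 2 S" and VP: "valid_profile N S v"
    using valid_two_item_instance[OF U x(1)] by (simp_all add: S_def v_def)
  have decl_x: "valid_decl (S j) (item_values a b 1 x)"
    and decl_0: "valid_decl (S j) (item_values a b 1 0)"
    using x S_ij by (auto intro: valid_decl_item_values)
  have VP': "valid_profile N S v'"
    unfolding v'_def using N by (intro valid_profile_update[OF VP _ decl_0]) auto
  have welfare_v': "welfare N S v' A = ext {{a}, {b}} (item_values a b 1 x) (A i)
                                      + ext {{a}, {b}} (item_values a b 1 0) (A j)" for A
    using N S_ij v_ij by (simp add: welfare_def v'_def)
  define A\<^sub>0 where "A\<^sub>0 = (\<lambda>k. if k = i then {b} else if k = j then {a} else {})"
  have "feasible N S A\<^sub>0"
    using N U by (auto simp: feasible_def A\<^sub>0_def S_def)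
  moreover have "welfare N S v' A\<^sub>0 = 1 + x"
    unfolding welfare_v' A\<^sub>0_def using N(2) U x by (simp add: ext_item_values item_values_def)
  ultimately have "1 + x \<le> OPT N S v'"
    by (metis welfare_le_OPT[OF fin VC])
  then have "(1 + x) / \<alpha> \<le> OPT N S v' / \<alpha>"
    using \<open>0 < \<alpha>\<close> by (simp add: divide_right_mono)
  also have "\<dots> \<le> measure_pmf.expectation (M S v') (welfare N S v')"
    using ratio VC VP' unfolding expected_approx_ratio_def by blast
  also have "\<dots> \<le> measure_pmf.expectation (M S v') (\<lambda>A. 1 + x * u A)"
  proof (rule expectation_mono_finite_support)
    show "finite (set_pmf (M S v'))" by (rule finite_set_pmf_mechanism[OF mech VC VP' fin])
    fix A assume "A \<in> set_pmf (M S v')"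
    then have "feasible N S A" using mech VC VP' unfolding is_mechanism_def by blast
    from feasible_two_items[OF N this[unfolded S_def]] U x show "welfare N S v' A \<le> 1 + x * u A"
      using item_values_misreport_le[of a b x "A i" "A j"]
      by (simp add: welfare_v' u_def ext_item_values)
  qed
  also have "\<dots> = 1 + x * measure_pmf.expectation (M S v') u"
    using finite_set_pmf_mechanism[OF mech VC VP' fin] by (simp add: integrable_measure_pmf_finite)
  also have "\<dots> \<le> 1 + x * measure_pmf.expectation (M S v) u"
  proof -
    have "v(j := item_values a b 1 x) = v"
      using v_ij by auto
    moreover have "\<forall>T\<in>S j. item_values a b 1 0 T \<le> item_values a b 1 x T"
      using x by (simp add: S_ij item_values_def)
    ultimately have "measure_pmf.expectation (M S v') u \<le> measure_pmf.expectation (M S v) u"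
      using truthful_underbid[OF truthful mech VC VP fin(2) _ decl_x decl_0] N
      by (simp add: v'_def u_def S_ij)
    then show ?thesis
      using x by (simp add: mult_left_mono)
  qed
  finally show ?thesis unfolding u_def .
qed

lemma approx_ratio_lower_bound:
  fixes M :: "('b, 'g) mechanism"
  assumes "card N = 2" "card U = 2"
    and mech: "is_mechanism N U 2 M" and truthful: "truthful_in_expectation N U 2 M"
    and ratio: "expected_approx_ratio N U 2 M \<alpha>" and "0 < \<alpha>" and x: "0 \<le> x" "x \<le> 1"
  shows "(1 + x) / \<alpha> \<le> 1 + x * (1 + x) / 2"
proof -
  obtain i j where N: "N = {i, j}" "i \<noteq> j" using assms(1) card_2_iff by metis
  obtain a b where U: "U = {a, b}" "a \<noteq> b" using assms(2) card_2_iff by metis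
  define S where "S = (\<lambda>k. if k \<in> N then {{a}, {b}} else {})"
  define v where "v = (\<lambda>k. if k \<in> N then item_values a b 1 x else (\<lambda>_. 0))"
  define u where "u k = (\<lambda>A. ext {{a}, {b}} (item_values a b 1 x) (A k))" for k :: 'b
  have VC: "valid_collections N U 2 S" and VP: "valid_profile N S v"
    using valid_two_item_instance[OF U x(1)] by (simp_all add: S_def v_def)
  have fin: "finite (set_pmf (M S v))"
    using finite_set_pmf_mechanism[OF mech VC VP] N U by simp
  have "measure_pmf.expectation (M S v) (\<lambda>A. u i A + u j A)
          \<le> measure_pmf.expectation (M S v) (\<lambda>_. 1 + x)"
  proof (rule expectation_mono_finite_support[OF fin])
    fix A assume "A \<in> set_pmf (M S v)"
    then have "feasible N S A" using mech VC VP unfolding is_mechanism_def by blast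
    from feasible_two_items[OF N this[unfolded S_def]] U x show "u i A + u j A \<le> 1 + x"
      using item_values_disjoint_sum_le[of a b x "A i" "A j"] by (simp add: u_def ext_item_values)
  qed
  then have truthful_welfare:
    "measure_pmf.expectation (M S v) (u i) + measure_pmf.expectation (M S v) (u j) \<le> 1 + x"
    using fin by (simp add: integrable_measure_pmf_finite)
  have "(1 + x) / \<alpha> \<le> 1 + x * measure_pmf.expectation (M S v) (u j)"
    using misreport_bound[OF N U mech truthful ratio \<open>0 < \<alpha>\<close> x] by (simp add: S_def v_def u_def)
  moreover have "(1 + x) / \<alpha> \<le> 1 + x * measure_pmf.expectation (M S v) (u i)"
    using misreport_bound[of N j i, OF _ _ U mech truthful ratio \<open>0 < \<alpha>\<close> x] N
    by (simp add: S_def v_def u_def insert_commute)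
  moreover have "x * measure_pmf.expectation (M S v) (u i) + x * measure_pmf.expectation (M S v) (u j)
                   \<le> x * (1 + x)"
    using mult_left_mono[OF truthful_welfare x(1)]
    by (simp only: distrib_left[of x "measure_pmf.expectation _ _"])
  ultimately show ?thesis
    by linarith
qed

theorem theorem13:
  fixes N :: "'b set" and U :: "'g set" and M :: "('b, 'g) mechanism"
  assumes "card N = 2" and "card U = 2"
    and "is_mechanism N U 2 M"
    and "truthful_in_expectation N U 2 M"
    and "expected_approx_ratio N U 2 M 1.09"
  shows False
proof -
  have "(1 + 2/5) / 1.09 \<le> 1 + 2/5 * (1 + 2/5) / (2 :: real)"
    using approx_ratio_lower_bound[OF assms, where x = "2/5"] by simp
  then show False by simp
qed

end
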